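(* Let $\alpha\geqslant1$, $N_1\in2^{\mathbb{N}_0}$, $N_2\in2^{\mathbb{Z}}$ with $N_1\gg N_2$, and $L_1,L_2\in2^{\mathbb{N}_0}$. For $i=1,2$ let $f_{i,N_i,L_i}:\mathbb{R}\times\mathbb{R}^2\to\mathbb{R}_{\geqslant0}$ with $\mathrm{supp}(f_{i,N_i,L_i})\subseteq D_{N_i,L_i}$. Then $$\|f_{1,N_1,L_1}*f_{2,N_2,L_2}\|_{L^2_{\tau,\xi,\eta}}\lesssim\frac{N_2^{\frac12}}{N_1^{\frac{\alpha}{4}}}\prod_{i=1}^2L_i^{\frac12}\|f_{i,N_i,L_i}\|_{L^2}.$$
   Context: $\omega_\alpha(\xi,\eta)=\xi|\xi|^\alpha+\frac{\eta^2}{\xi}$; $A_N=\{\xi\in\mathbb{R}:N/4\leqslant|\xi|\leqslant4N\}$; $D_{N,L}=\{(\tau,\xi,\eta)\in\mathbb{R}^3:\xi\in A_N,\ |\tau-\omega_\alpha(\xi,\eta)|\leqslant L\}$. Convolution is in $(\tau,\xi,\eta)\in\mathbb{R}^3$ with Lebesgue measure. *)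

theory Defs
  imports "HOL-Analysis.Analysis"
begin

definition omega :: "real \<Rightarrow> real \<Rightarrow> real \<Rightarrow> real" where
  "omega \<alpha> \<xi> \<eta> = \<xi> * \<bar>\<xi>\<bar> powr \<alpha> + \<eta>\<^sup>2 / \<xi>"

definition annulus :: "real \<Rightarrow> real set" where
  "annulus N = {\<xi>. N / 4 \<le> \<bar>\<xi>\<bar> \<and> \<bar>\<xi>\<bar> \<le> 4 * N}"

definition Dset :: "real \<Rightarrow> real \<Rightarrow> real \<Rightarrow> (real \<times> real \<times> real) set" where
  "Dset \<alpha> N L = {(\<tau>, \<xi>, \<eta>). \<xi> \<in> annulus N \<and> \<bar>\<tau> - omega \<alpha> \<xi> \<eta>\<bar> \<le> L}"

definition conv3 :: "(real \<times> real \<times> real \<Rightarrow> real) \<Rightarrow> (real \<times> real \<times> real \<Rightarrow> real)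
    \<Rightarrow> real \<times> real \<times> real \<Rightarrow> ennreal" where
  "conv3 f g x = (\<integral>\<^sup>+ y. ennreal (f y) * ennreal (g (x - y)) \<partial>lborel)"

definition L2sq :: "(real \<times> real \<times> real \<Rightarrow> real) \<Rightarrow> ennreal" where
  "L2sq f = (\<integral>\<^sup>+ x. ennreal ((f x)\<^sup>2) \<partial>lborel)"

end

theory Submission
  imports Defs
begin

(* Cauchy-Schwarz in the convolution integral bounds the squared L^2 norm of f1 * f2 by the
   squared L^2 norms of f1 and f2 times the supremum over x of the measure of
   {y. y \<in> D(N1,L1), x - y \<in> D(N2,L2)}.  For x = (tau, xi, eta) the tau-fibres of this set
   have length at most 2 min(L1, L2), and its projection lies in the resonance set where
   |tau - omega(a, b) - omega(xi - a, eta - b)| <= L1 + L2.  In the sheared variable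
   b = eta a / xi + u the phase is eta^2 / xi plus a function of a whose a-derivative is at
   least c (N1^alpha + u^2 / N2^2) on each of the four intervals that make up
   A(N1) \<inter> (xi - A(N2)) once N1 >= 32 N2.  Hence each u-slice of the resonance set has length
   at most C (L1 + L2) / (N1^alpha + u^2 / N2^2), and integrating in u bounds its area by
   C (L1 + L2) N2 / N1^(alpha/2). *)

lemma nn_integral_convolution_square_le:
  fixes f g :: "'a::euclidean_space \<Rightarrow> real" and c :: ennreal
  assumes [measurable]: "f \<in> borel_measurable lborel" "g \<in> borel_measurable lborel"
    and nonneg: "\<And>x. f x \<ge> 0" "\<And>x. g x \<ge> 0"
    and overlap: "\<And>x. emeasure lborel {y. f y \<noteq> 0 \<and> g (x - y) \<noteq> 0} \<le> c"
  shows "(\<integral>\<^sup>+x. (\<integral>\<^sup>+y. ennreal (f y) * ennreal (g (x - y)) \<partial>lborel)\<^sup>2 \<partial>lborel)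
    \<le> c * (\<integral>\<^sup>+x. ennreal ((f x)\<^sup>2) \<partial>lborel) * (\<integral>\<^sup>+x. ennreal ((g x)\<^sup>2) \<partial>lborel)"
proof -
  define E where "E x = {y. f y \<noteq> 0 \<and> g (x - y) \<noteq> 0}" for x
  have E_sets[measurable]: "E x \<in> sets lborel" for x
    unfolding E_def by measurable
  define h where "h x y = ennreal ((f y)\<^sup>2) * ennreal ((g (x - y))\<^sup>2)" for x y
  have [measurable]: "case_prod h \<in> borel_measurable (lborel \<Otimes>\<^sub>M lborel)"
    unfolding h_def by measurable
  have pointwise:
    "(\<integral>\<^sup>+y. ennreal (f y) * ennreal (g (x - y)) \<partial>lborel)\<^sup>2 \<le> c * (\<integral>\<^sup>+y. h x y \<partial>lborel)" for x
  proof -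
    have "(\<integral>\<^sup>+y. ennreal (f y) * ennreal (g (x - y)) \<partial>lborel)
        = (\<integral>\<^sup>+y. (ennreal (f y) * ennreal (g (x - y))) * indicator (E x) y \<partial>lborel)"
      by (intro nn_integral_cong) (auto simp: E_def indicator_def)
    also have "(\<dots>)\<^sup>2 \<le> (\<integral>\<^sup>+y. (ennreal (f y) * ennreal (g (x - y)))\<^sup>2 \<partial>lborel)
        * (\<integral>\<^sup>+y. (indicator (E x) y)\<^sup>2 \<partial>lborel)"
      by (rule Cauchy_Schwarz_nn_integral) auto
    also have "(\<integral>\<^sup>+y. (indicator (E x) y :: ennreal)\<^sup>2 \<partial>lborel) = emeasure lborel (E x)"
      unfolding power2_eq_square indicator_inter_arith[symmetric] Int_absorb
      by (rule nn_integral_indicator) (rule E_sets)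
    also have "\<dots> \<le> c"
      unfolding E_def by (rule overlap)
    also have "(\<integral>\<^sup>+y. (ennreal (f y) * ennreal (g (x - y)))\<^sup>2 \<partial>lborel) = (\<integral>\<^sup>+y. h x y \<partial>lborel)"
      by (simp add: h_def power_mult_distrib ennreal_power nonneg)
    finally show ?thesis
      by (simp add: mult.commute mult_right_mono)
  qed
  have translate: "(\<integral>\<^sup>+x. ennreal ((g (x - y))\<^sup>2) \<partial>lborel) = (\<integral>\<^sup>+x. ennreal ((g x)\<^sup>2) \<partial>lborel)" for y
  proof -
    have "(\<integral>\<^sup>+x. ennreal ((g x)\<^sup>2) \<partial>lborel) = (\<integral>\<^sup>+x. ennreal ((g x)\<^sup>2) \<partial>distr lborel borel ((+) (-y)))"
      by (simp only: lborel_distr_plus)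
    also have "\<dots> = (\<integral>\<^sup>+x. ennreal ((g (x - y))\<^sup>2) \<partial>lborel)"
      by (subst nn_integral_distr) auto
    finally show ?thesis ..
  qed
  have "(\<integral>\<^sup>+x. (\<integral>\<^sup>+y. ennreal (f y) * ennreal (g (x - y)) \<partial>lborel)\<^sup>2 \<partial>lborel)
      \<le> (\<integral>\<^sup>+x. c * (\<integral>\<^sup>+y. h x y \<partial>lborel) \<partial>lborel)"
    by (intro nn_integral_mono pointwise)
  also have "\<dots> = c * (\<integral>\<^sup>+x. \<integral>\<^sup>+y. h x y \<partial>lborel \<partial>lborel)"
    by (rule nn_integral_cmult) measurable
  also have "(\<integral>\<^sup>+x. \<integral>\<^sup>+y. h x y \<partial>lborel \<partial>lborel) = (\<integral>\<^sup>+y. \<integral>\<^sup>+x. h x y \<partial>lborel \<partial>lborel)"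
    by (rule lborel_pair.Fubini') measurable
  also have "(\<integral>\<^sup>+y. \<integral>\<^sup>+x. h x y \<partial>lborel \<partial>lborel)
      = (\<integral>\<^sup>+y. ennreal ((f y)\<^sup>2) * (\<integral>\<^sup>+x. ennreal ((g x)\<^sup>2) \<partial>lborel) \<partial>lborel)"
    by (simp add: h_def nn_integral_cmult translate)
  also have "\<dots> = (\<integral>\<^sup>+x. ennreal ((f x)\<^sup>2) \<partial>lborel) * (\<integral>\<^sup>+x. ennreal ((g x)\<^sup>2) \<partial>lborel)"
    by (simp add: nn_integral_multc)
  finally show ?thesis
    by (simp add: mult.assoc)
qed

lemma (in pair_sigma_finite) emeasure_pair_measure_le_fibre_bound:
  assumes A: "A \<in> sets (M1 \<Otimes>\<^sub>M M2)" and B: "B \<in> sets M2"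
    and proj: "\<And>x y. (x, y) \<in> A \<Longrightarrow> y \<in> B"
    and fibre: "\<And>y. y \<in> B \<Longrightarrow> emeasure M1 ((\<lambda>x. (x, y)) -` A) \<le> c"
  shows "emeasure (M1 \<Otimes>\<^sub>M M2) A \<le> c * emeasure M2 B"
proof -
  have "emeasure M1 ((\<lambda>x. (x, y)) -` A) \<le> c * indicator B y" for y
  proof (cases "y \<in> B")
    case False
    then have "(\<lambda>x. (x, y)) -` A = {}"
      using proj by blast
    then show ?thesis by simp
  qed (simp add: fibre)
  then have "(\<integral>\<^sup>+y. emeasure M1 ((\<lambda>x. (x, y)) -` A) \<partial>M2) \<le> (\<integral>\<^sup>+y. c * indicator B y \<partial>M2)"
    by (intro nn_integral_mono)
  then show ?thesis
    using B by (simp add: emeasure_pair_measure_alt2[OF A] nn_integral_cmult_indicator)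
qed

lemma emeasure_lborel_shear:
  fixes A :: "(real \<times> real) set" and c :: real
  assumes A: "A \<in> sets borel"
  shows "emeasure lborel A = (\<integral>\<^sup>+u. emeasure lborel {x. (x, c * x + u) \<in> A} \<partial>lborel)"
proof -
  have shear: "(\<lambda>(x, u). (x, c * x + u)) \<in> borel_measurable (borel :: (real \<times> real) measure)"
    unfolding case_prod_beta' by (intro borel_measurable_continuous_onI continuous_intros)
  have [measurable]:
    "(\<lambda>(x, u). indicator A (x, c * x + u) :: ennreal) \<in> borel_measurable (lborel \<Otimes>\<^sub>M lborel)"
    using measurable_compose[OF shear borel_measurable_indicator[OF A]]
    by (simp add: lborel_prod case_prod_beta')
  have "(\<lambda>x. (x, c * x + u)) -` A \<inter> space borel \<in> sets borel" for u
    by (intro measurable_sets[OF _ A] borel_measurable_continuous_onI continuous_intros)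
  then have slice_sets: "{x. (x, c * x + u) \<in> A} \<in> sets lborel" for u
    by (simp add: vimage_def)
  have "emeasure lborel A = (\<integral>\<^sup>+x. \<integral>\<^sup>+y. indicator A (x, y) \<partial>lborel \<partial>lborel)"
  proof -
    have "A \<in> sets (lborel \<Otimes>\<^sub>M lborel)"
      using A by (simp only: lborel_prod sets_lborel)
    then show ?thesis
      unfolding lborel_prod[symmetric] by (rule lborel.emeasure_pair_measure)
  qed
  also have "\<dots> = (\<integral>\<^sup>+x. \<integral>\<^sup>+u. indicator A (x, c * x + u) \<partial>lborel \<partial>lborel)"
  proof (rule nn_integral_cong)
    fix x :: real
    have "(\<lambda>y. (x, y)) \<in> borel_measurable (borel :: real measure)"
      by (intro borel_measurable_continuous_onI continuous_intros)
    from measurable_compose[OF this borel_measurable_indicator[OF A]]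
    show "(\<integral>\<^sup>+y. indicator A (x, y) \<partial>lborel) = (\<integral>\<^sup>+u. indicator A (x, c * x + u) \<partial>lborel)"
      using nn_integral_real_affine[of "\<lambda>y. indicator A (x, y)" 1 "c * x"] by simp
  qed
  also have "\<dots> = (\<integral>\<^sup>+u. \<integral>\<^sup>+x. indicator A (x, c * x + u) \<partial>lborel \<partial>lborel)"
    by (rule lborel_pair.Fubini') measurable
  also have "\<dots> = (\<integral>\<^sup>+u. emeasure lborel {x. (x, c * x + u) \<in> A} \<partial>lborel)"
  proof (rule nn_integral_cong)
    fix u :: real
    have "(\<lambda>x. indicator A (x, c * x + u)) = (indicator {x. (x, c * x + u) \<in> A} :: real \<Rightarrow> ennreal)"
      by (auto simp: indicator_def)
    then show "(\<integral>\<^sup>+x. indicator A (x, c * x + u) \<partial>lborel) = emeasure lborel {x. (x, c * x + u) \<in> A}"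
      using slice_sets by simp
  qed
  finally show ?thesis .
qed

lemma emeasure_near_level_le_of_deriv_ge:
  fixes f f' :: "real \<Rightarrow> real"
  assumes I: "is_interval I" and D: "D > 0"
    and deriv: "\<And>s. s \<in> I \<Longrightarrow> (f has_real_derivative f' s) (at s)"
    and deriv_ge: "\<And>s. s \<in> I \<Longrightarrow> D \<le> f' s"
  shows "emeasure lborel {s \<in> I. \<bar>c - f s\<bar> \<le> M} \<le> ennreal (2 * M / D)"
proof -
  define S where "S = {s \<in> I. \<bar>c - f s\<bar> \<le> M}"
  have spread: "b - a \<le> 2 * M / D" if "a \<in> S" "b \<in> S" "a \<le> b" for a b
  proof -
    have "f a - D * a \<le> f b - D * b"
    proof (rule DERIV_nonneg_imp_nondecreasing[OF \<open>a \<le> b\<close>])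
      fix x assume "a \<le> x" "x \<le> b"
      then have "x \<in> I"
        using I that unfolding S_def is_interval_1 by blast
      then show "\<exists>y. ((\<lambda>s. f s - D * s) has_real_derivative y) (at x) \<and> 0 \<le> y"
        using deriv deriv_ge by (intro exI conjI derivative_eq_intros) auto
    qed
    moreover have "f b - f a \<le> 2 * M"
      using that unfolding S_def by (simp add: abs_le_iff)
    ultimately show ?thesis
      using D by (simp add: field_simps)
  qed
  show ?thesis
  proof (cases "S = {}")
    case False
    then obtain s0 where "s0 \<in> S" by blast
    then have width: "0 \<le> 2 * M / D"
      using spread by fastforce
    have lower: "s - 2 * M / D \<le> t" if "s \<in> S" "t \<in> S" for s t
      using spread[of t s] that width by (cases "t \<le> s") auto
    have "bdd_below S"
      by (rule bdd_belowI[of _ "s0 - 2 * M / D"]) (rule lower[OF \<open>s0 \<in> S\<close>])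
    have "S \<subseteq> {Inf S .. Inf S + 2 * M / D}"
    proof
      fix s assume "s \<in> S"
      have "Inf S \<le> s"
        using \<open>s \<in> S\<close> \<open>bdd_below S\<close> by (rule cInf_lower)
      moreover have "s - 2 * M / D \<le> Inf S"
        using False lower[OF \<open>s \<in> S\<close>] by (rule cInf_greatest)
      ultimately show "s \<in> {Inf S .. Inf S + 2 * M / D}"
        by simp
    qed
    then have "emeasure lborel S \<le> emeasure lborel {Inf S .. Inf S + 2 * M / D}"
      by (rule emeasure_mono) simp
    then show ?thesis
      using width unfolding S_def by simp
  qed (simp add: S_def[symmetric])
qed

lemma nn_integral_inverse_quadratic:
  fixes A B :: real
  assumes A: "A > 0" and B: "B > 0"
  shows "(\<integral>\<^sup>+u. ennreal (1 / (A + B * u\<^sup>2)) \<partial>lborel) = ennreal (pi / sqrt (A * B))"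
proof -
  define g where "g u = 1 / (A + B * u\<^sup>2)" for u :: real
  define F where "F u = arctan (u * sqrt (B / A)) / sqrt (A * B)" for u :: real
  have denom_pos: "A + B * u\<^sup>2 > 0" for u
    using A B by (simp add: add_pos_nonneg)
  have [measurable]: "g \<in> borel_measurable borel"
    unfolding g_def by measurable
  let ?I = "\<lambda>S. \<integral>\<^sup>+u. ennreal (g u) * indicator S u \<partial>lborel"
  have "(F has_real_derivative g u) (at u)" for u
  proof -
    have "(F has_real_derivative
        inverse (1 + (u * sqrt (B / A))\<^sup>2) * (1 * sqrt (B / A)) / sqrt (A * B)) (at u)"
      unfolding F_def
      by (intro DERIV_cdivide DERIV_chain2[OF DERIV_arctan] DERIV_cmult_right DERIV_ident)
    moreover have "inverse (1 + (u * sqrt (B / A))\<^sup>2) * (1 * sqrt (B / A)) / sqrt (A * B) = g u"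
    proof -
      have "sqrt (B / A) / sqrt (A * B) = 1 / A" "(u * sqrt (B / A))\<^sup>2 = u\<^sup>2 * B / A"
        using A B by (simp_all add: real_sqrt_divide real_sqrt_mult power_mult_distrib field_simps)
      then have "inverse (1 + (u * sqrt (B / A))\<^sup>2) * (1 * sqrt (B / A)) / sqrt (A * B)
          = inverse (1 + u\<^sup>2 * B / A) * (1 / A)"
        by (simp add: times_divide_eq_right[symmetric] del: times_divide_eq_right)
      then show ?thesis
        using A by (simp add: g_def field_simps)
    qed
    ultimately show ?thesis by simp
  qed
  moreover have "(F \<longlongrightarrow> (pi / 2) / sqrt (A * B)) at_top"
    unfolding F_def
    by (intro tendsto_divide tendsto_const filterlim_compose[OF tendsto_arctan_at_top]
          filterlim_at_top_mult_tendsto_pos[OF tendsto_const] filterlim_ident) (use A B in auto)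
  ultimately have right: "?I {0..} = ennreal (pi / 2 / sqrt (A * B))"
    by (subst nn_integral_FTC_atLeast[where F=F]) (auto simp: g_def F_def less_imp_le denom_pos)
  have "?I {..<0} = ?I {..0}"
    using AE_lborel_singleton[of 0]
    by (intro nn_integral_cong_AE) (auto elim!: eventually_mono simp: indicator_def)
  also have "\<dots> = ?I {0..}"
    by (subst nn_integral_real_affine[where c="-1" and t=0]) (auto simp: g_def indicator_def)
  finally have left: "?I {..<0} = ennreal (pi / 2 / sqrt (A * B))"
    using right by simp
  have "(\<integral>\<^sup>+u. ennreal (g u) \<partial>lborel)
      = (\<integral>\<^sup>+u. ennreal (g u) * indicator {0..} u + ennreal (g u) * indicator {..<0} u \<partial>lborel)"
    by (intro nn_integral_cong) (simp add: indicator_def)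
  also have "\<dots> = ?I {0..} + ?I {..<0}"
    by (rule nn_integral_add) measurable
  also have "\<dots> = ennreal (pi / 2 / sqrt (A * B)) + ennreal (pi / 2 / sqrt (A * B))"
    unfolding right left ..
  also have "\<dots> = ennreal (pi / sqrt (A * B))"
    using A B by (simp flip: ennreal_plus)
  finally show ?thesis
    by (simp add: g_def)
qed

lemma has_real_derivative_mult_abs_powr[derivative_intros]:
  fixes f :: "real \<Rightarrow> real"
  assumes f: "(f has_real_derivative f') (at x within S)" and nonzero: "f x \<noteq> 0"
  shows "((\<lambda>t. f t * \<bar>f t\<bar> powr a) has_real_derivative (a + 1) * \<bar>f x\<bar> powr a * f') (at x within S)"
proof -
  define s where "s = f x"
  define \<sigma> where "\<sigma> = sgn s"
  have \<sigma>: "\<sigma> * \<sigma> = 1" "\<sigma> * s = \<bar>s\<bar>" "\<sigma> * s > 0"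
    using nonzero by (auto simp: s_def \<sigma>_def sgn_if)
  have "((\<lambda>t. \<sigma> * (\<sigma> * t) powr (a + 1)) has_real_derivative
      \<sigma> * ((a + 1) * (\<sigma> * s) powr (a + 1 - of_nat 1) * \<sigma>)) (at s)"
    using \<sigma> by (intro DERIV_cmult DERIV_fun_powr DERIV_cmult_right DERIV_ident) simp
  moreover have "\<sigma> * (X * \<sigma>) = X" for X
    by (metis \<sigma>(1) mult.left_commute mult.right_neutral)
  ultimately have "((\<lambda>t. \<sigma> * (\<sigma> * t) powr (a + 1)) has_real_derivative (a + 1) * \<bar>s\<bar> powr a) (at s)"
    using \<sigma>(2) by simp
  then have "((\<lambda>t. t * \<bar>t\<bar> powr a) has_real_derivative (a + 1) * \<bar>s\<bar> powr a) (at s)"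
    \<comment> \<open>the two functions agree on the half-line where \<open>t\<close> has the sign of \<open>s\<close>\<close>
  proof (rule has_field_derivative_transform_within_open)
    show "open {t. 0 < \<sigma> * t}"
      by (intro open_Collect_less continuous_intros)
    show "s \<in> {t. 0 < \<sigma> * t}"
      using \<sigma> by simp
    fix t assume "t \<in> {t. 0 < \<sigma> * t}"
    then have "\<sigma> * t = \<bar>t\<bar>" "\<sigma> * t > 0"
      using \<sigma> by (auto simp: \<sigma>_def sgn_if split: if_splits)
    then show "\<sigma> * (\<sigma> * t) powr (a + 1) = t * \<bar>t\<bar> powr a"
      using \<sigma> by (simp add: powr_add algebra_simps)
  qed
  from DERIV_chain'[OF f this[unfolded s_def]] show ?thesis
    by (simp add: s_def mult.commute)
qed

lemma powr_diff_ge_half: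
  fixes x y \<alpha> :: real
  assumes "1 \<le> \<alpha>" "0 \<le> y" "y \<le> x / 2"
  shows "x powr \<alpha> / 2 \<le> (\<alpha> + 1) * (x powr \<alpha> - y powr \<alpha>)"
proof -
  have "y powr \<alpha> \<le> (x / 2) powr \<alpha>"
    using assms by (intro powr_mono2) auto
  also have "\<dots> = x powr \<alpha> / 2 powr \<alpha>"
    using assms by (simp add: powr_divide)
  also have "\<dots> \<le> x powr \<alpha> / 2"
    using powr_mono[of 1 \<alpha> 2] assms by (intro divide_left_mono) auto
  finally have "x powr \<alpha> / 2 \<le> x powr \<alpha> - y powr \<alpha>"
    by simp
  moreover have "0 \<le> x powr \<alpha> - y powr \<alpha>"
    using calculation powr_ge_zero[of x \<alpha>] by linarith
  then have "0 \<le> \<alpha> * (x powr \<alpha> - y powr \<alpha>)"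
    using assms by simp
  ultimately show ?thesis
    by (simp add: algebra_simps)
qed

lemma inverse_square_diff_ge:
  fixes s t :: real
  assumes "t \<noteq> 0" "\<bar>t\<bar> \<le> \<bar>s\<bar> / 2"
  shows "3 / (4 * t\<^sup>2) \<le> inverse t ^ 2 - inverse s ^ 2"
proof -
  have "(2 * \<bar>t\<bar>)\<^sup>2 \<le> \<bar>s\<bar>\<^sup>2"
    using assms by (intro power_mono) auto
  then have "1 / s\<^sup>2 \<le> 1 / (4 * t\<^sup>2)"
    using assms by (intro divide_left_mono) (auto simp: power_mult_distrib)
  then have "inverse s ^ 2 \<le> 1 / (4 * t\<^sup>2)"
    by (simp add: power_one_over inverse_eq_divide)
  moreover have "inverse t ^ 2 - 1 / (4 * t\<^sup>2) = 3 / (4 * t\<^sup>2)"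
    using assms by (simp add: field_simps)
  ultimately show ?thesis
    by linarith
qed

lemma annulus_iff_signed: "s \<in> annulus N \<longleftrightarrow> (\<exists>\<sigma>\<in>{-1, 1}. \<sigma> * s \<in> {N / 4 .. 4 * N})"
  by (auto simp: annulus_def abs_if)

lemma borel_measurable_omega[measurable]:
  assumes [measurable]: "f \<in> borel_measurable M" "g \<in> borel_measurable M"
  shows "(\<lambda>x. omega \<alpha> (f x) (g x)) \<in> borel_measurable M"
  unfolding omega_def by measurable

lemma pred_in_annulus[measurable]:
  assumes [measurable]: "f \<in> borel_measurable M"
  shows "Measurable.pred M (\<lambda>x. f x \<in> annulus N)"
  unfolding annulus_def by measurable

lemma Dset_sets[measurable]: "Dset \<alpha> N L \<in> sets borel"
proof -
  have "Measurable.pred (borel \<Otimes>\<^sub>M borel \<Otimes>\<^sub>M borel) (\<lambda>(\<tau>, \<xi>, \<eta>). \<xi> \<in> annulus N \<and> \<bar>\<tau> - omega \<alpha> \<xi> \<eta>\<bar> \<le> L)"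
    by measurable
  then show ?thesis
    unfolding Dset_def by (simp add: borel_prod pred_Collect_borel)
qed

definition resonance :: "real \<Rightarrow> real \<Rightarrow> real \<Rightarrow> real \<Rightarrow> real" where
  "resonance \<alpha> \<xi> u s = s * \<bar>s\<bar> powr \<alpha> + (\<xi> - s) * \<bar>\<xi> - s\<bar> powr \<alpha> + u\<^sup>2 * (inverse s + inverse (\<xi> - s))"

lemma omega_add_omega_sheared:
  assumes "s \<noteq> 0" "\<xi> - s \<noteq> 0" "\<xi> \<noteq> 0"
  shows "omega \<alpha> s (\<eta> / \<xi> * s + u) + omega \<alpha> (\<xi> - s) (\<eta> - (\<eta> / \<xi> * s + u)) = resonance \<alpha> \<xi> u s + \<eta>\<^sup>2 / \<xi>"
proof -
  have "(\<eta> / \<xi> * s + u)\<^sup>2 / s + (\<eta> - (\<eta> / \<xi> * s + u))\<^sup>2 / (\<xi> - s)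
      = u\<^sup>2 * (inverse s + inverse (\<xi> - s)) + \<eta>\<^sup>2 / \<xi>"
    using assms by (simp add: field_simps power2_eq_square)
  then show ?thesis
    unfolding omega_def resonance_def by simp
qed

lemma has_real_derivative_resonance:
  assumes "s \<noteq> 0" "\<xi> - s \<noteq> 0"
  shows "(resonance \<alpha> \<xi> u has_real_derivative
      (\<alpha> + 1) * (\<bar>s\<bar> powr \<alpha> - \<bar>\<xi> - s\<bar> powr \<alpha>) + u\<^sup>2 * (inverse (\<xi> - s) ^ 2 - inverse s ^ 2)) (at s)"
proof -
  have "((\<lambda>s. s * \<bar>s\<bar> powr \<alpha>) has_real_derivative (\<alpha> + 1) * \<bar>s\<bar> powr \<alpha>) (at s)"
    using has_real_derivative_mult_abs_powr[OF DERIV_ident assms(1)] by simp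
  moreover have "((\<lambda>s. (\<xi> - s) * \<bar>\<xi> - s\<bar> powr \<alpha>) has_real_derivative
      - ((\<alpha> + 1) * \<bar>\<xi> - s\<bar> powr \<alpha>)) (at s)"
    using has_real_derivative_mult_abs_powr[OF DERIV_diff[OF DERIV_const DERIV_ident] assms(2)] by simp
  moreover have "((\<lambda>s. u\<^sup>2 * (inverse s + inverse (\<xi> - s))) has_real_derivative
      u\<^sup>2 * (inverse (\<xi> - s) ^ 2 - inverse s ^ 2)) (at s)"
    using assms by (auto intro!: derivative_eq_intros simp: power2_eq_square)
  ultimately have "((\<lambda>s. s * \<bar>s\<bar> powr \<alpha> + (\<xi> - s) * \<bar>\<xi> - s\<bar> powr \<alpha> + u\<^sup>2 * (inverse s + inverse (\<xi> - s)))
      has_real_derivative (\<alpha> + 1) * \<bar>s\<bar> powr \<alpha> + - ((\<alpha> + 1) * \<bar>\<xi> - s\<bar> powr \<alpha>)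
        + u\<^sup>2 * (inverse (\<xi> - s) ^ 2 - inverse s ^ 2)) (at s)"
    by (intro DERIV_add)
  then show ?thesis
    unfolding resonance_def[abs_def] by (rule DERIV_cong) (simp add: algebra_simps)
qed

lemma resonance_deriv_ge:
  fixes \<alpha> N1 N2 \<xi> s u :: real
  assumes \<alpha>: "1 \<le> \<alpha>" and N2: "0 < N2" and N12: "32 * N2 \<le> N1"
    and s: "s \<in> annulus N1" "\<xi> - s \<in> annulus N2"
  shows "(N1 / 4) powr \<alpha> / 2 + 3 / (64 * N2\<^sup>2) * u\<^sup>2
    \<le> (\<alpha> + 1) * (\<bar>s\<bar> powr \<alpha> - \<bar>\<xi> - s\<bar> powr \<alpha>) + u\<^sup>2 * (inverse (\<xi> - s) ^ 2 - inverse s ^ 2)"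
proof -
  have s_ge: "N1 / 4 \<le> \<bar>s\<bar>" and t_ge: "N2 / 4 \<le> \<bar>\<xi> - s\<bar>" and t_le: "\<bar>\<xi> - s\<bar> \<le> 4 * N2"
    using s unfolding annulus_def by auto
  have half: "\<bar>\<xi> - s\<bar> \<le> \<bar>s\<bar> / 2"
    using s_ge t_le N12 by linarith
  have t_pos: "0 < (\<xi> - s)\<^sup>2"
    using t_ge N2 by auto
  have "(N1 / 4) powr \<alpha> / 2 \<le> \<bar>s\<bar> powr \<alpha> / 2"
    using s_ge N2 N12 \<alpha> by (simp add: powr_mono2)
  also have "\<dots> \<le> (\<alpha> + 1) * (\<bar>s\<bar> powr \<alpha> - \<bar>\<xi> - s\<bar> powr \<alpha>)"
    using \<alpha> half by (intro powr_diff_ge_half) auto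
  finally have powr_part: "(N1 / 4) powr \<alpha> / 2 \<le> (\<alpha> + 1) * (\<bar>s\<bar> powr \<alpha> - \<bar>\<xi> - s\<bar> powr \<alpha>)" .
  have "(\<xi> - s)\<^sup>2 \<le> (4 * N2)\<^sup>2"
    using t_le by (metis abs_ge_zero power2_abs power_mono)
  then have "3 / (64 * N2\<^sup>2) \<le> 3 / (4 * (\<xi> - s)\<^sup>2)"
    using t_pos N2 by (intro divide_left_mono) (auto simp: power_mult_distrib)
  also have "\<dots> \<le> inverse (\<xi> - s) ^ 2 - inverse s ^ 2"
    using t_ge N2 half by (intro inverse_square_diff_ge) auto
  finally have "3 / (64 * N2\<^sup>2) * u\<^sup>2 \<le> (inverse (\<xi> - s) ^ 2 - inverse s ^ 2) * u\<^sup>2"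
    by (rule mult_right_mono) simp
  with powr_part show ?thesis
    by (simp add: mult.commute)
qed

lemma emeasure_resonance_near_level_le:
  fixes \<alpha> N1 N2 \<xi> u c M :: real
  assumes \<alpha>: "1 \<le> \<alpha>" and N2: "0 < N2" and N12: "32 * N2 \<le> N1"
  shows "emeasure lborel {s. s \<in> annulus N1 \<and> \<xi> - s \<in> annulus N2 \<and> \<bar>c - resonance \<alpha> \<xi> u s\<bar> \<le> M}
    \<le> ennreal (8 * M / ((N1 / 4) powr \<alpha> / 2 + 3 / (64 * N2\<^sup>2) * u\<^sup>2))"
proof -
  define D where "D = (N1 / 4) powr \<alpha> / 2 + 3 / (64 * N2\<^sup>2) * u\<^sup>2"
  have "0 < D"
    unfolding D_def using N2 N12 by (intro add_pos_nonneg) auto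
  define signs :: "(real \<times> real) set" where "signs = {-1, 1} \<times> {-1, 1}"
  define piece where "piece \<sigma> = {s. fst \<sigma> * s \<in> {N1 / 4 .. 4 * N1} \<and> snd \<sigma> * (\<xi> - s) \<in> {N2 / 4 .. 4 * N2}}"
    for \<sigma> :: "real \<times> real"
  have in_annuli: "s \<in> annulus N1" "\<xi> - s \<in> annulus N2" if "s \<in> piece \<sigma>" "\<sigma> \<in> signs" for s \<sigma>
    using that unfolding piece_def signs_def annulus_iff_signed by auto
  have piece_bound: "emeasure lborel {s \<in> piece \<sigma>. \<bar>c - resonance \<alpha> \<xi> u s\<bar> \<le> M} \<le> ennreal (2 * M / D)"
    if "\<sigma> \<in> signs" for \<sigma>
  proof (rule emeasure_near_level_le_of_deriv_ge)
    show "is_interval (piece \<sigma>)"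
      using that unfolding is_interval_1 piece_def signs_def by auto
    fix s assume "s \<in> piece \<sigma>"
    note s = in_annuli[OF this that]
    then have "s \<noteq> 0" "\<xi> - s \<noteq> 0"
      using N2 N12 unfolding annulus_def by auto
    then show "(resonance \<alpha> \<xi> u has_real_derivative
        (\<alpha> + 1) * (\<bar>s\<bar> powr \<alpha> - \<bar>\<xi> - s\<bar> powr \<alpha>) + u\<^sup>2 * (inverse (\<xi> - s) ^ 2 - inverse s ^ 2)) (at s)"
      by (rule has_real_derivative_resonance)
    show "D \<le> (\<alpha> + 1) * (\<bar>s\<bar> powr \<alpha> - \<bar>\<xi> - s\<bar> powr \<alpha>) + u\<^sup>2 * (inverse (\<xi> - s) ^ 2 - inverse s ^ 2)"
      unfolding D_def using \<alpha> N2 N12 s by (rule resonance_deriv_ge)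
  qed fact
  have "{s. s \<in> annulus N1 \<and> \<xi> - s \<in> annulus N2 \<and> \<bar>c - resonance \<alpha> \<xi> u s\<bar> \<le> M}
      = (\<Union>\<sigma>\<in>signs. {s \<in> piece \<sigma>. \<bar>c - resonance \<alpha> \<xi> u s\<bar> \<le> M})"
    using in_annuli unfolding annulus_iff_signed signs_def piece_def by auto
  also have "emeasure lborel \<dots> \<le> (\<Sum>\<sigma>\<in>signs. emeasure lborel {s \<in> piece \<sigma>. \<bar>c - resonance \<alpha> \<xi> u s\<bar> \<le> M})"
    by (rule emeasure_subadditive_finite) (auto simp: signs_def piece_def resonance_def)
  also have "\<dots> \<le> (\<Sum>\<sigma>\<in>signs. ennreal (2 * M / D))"
    by (intro sum_mono piece_bound)
  also have "\<dots> = ennreal (8 * M / D)"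
    using ennreal_mult'[of 4 "2 * M / D"] by (simp add: signs_def)
  finally show ?thesis
    unfolding D_def .
qed

definition resonance_set :: "real \<Rightarrow> real \<Rightarrow> real \<Rightarrow> real \<Rightarrow> real \<Rightarrow> real \<Rightarrow> real \<Rightarrow> (real \<times> real) set" where
  "resonance_set \<alpha> N1 N2 \<tau> \<xi> \<eta> M = {(a, b). a \<in> annulus N1 \<and> \<xi> - a \<in> annulus N2 \<and>
      \<bar>\<tau> - omega \<alpha> a b - omega \<alpha> (\<xi> - a) (\<eta> - b)\<bar> \<le> M}"

lemma resonance_set_sets[measurable]: "resonance_set \<alpha> N1 N2 \<tau> \<xi> \<eta> M \<in> sets borel"
proof -
  have "Measurable.pred (borel \<Otimes>\<^sub>M borel) (\<lambda>(a, b). a \<in> annulus N1 \<and> \<xi> - a \<in> annulus N2 \<and>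
      \<bar>\<tau> - omega \<alpha> a b - omega \<alpha> (\<xi> - a) (\<eta> - b)\<bar> \<le> M)"
    by measurable
  then show ?thesis
    unfolding resonance_set_def by (simp add: borel_prod pred_Collect_borel)
qed

lemma emeasure_resonance_set_le:
  fixes \<alpha> N1 N2 \<tau> \<xi> \<eta> M :: real
  assumes \<alpha>: "1 \<le> \<alpha>" and N2: "0 < N2" and N12: "32 * N2 \<le> N1" and M: "0 \<le> M"
  shows "emeasure lborel (resonance_set \<alpha> N1 N2 \<tau> \<xi> \<eta> M)
    \<le> ennreal (8 * pi * 2 powr \<alpha> / sqrt (3 / 128) * M * N2 / N1 powr (\<alpha> / 2))"
proof -
  define A where "A = (N1 / 4) powr \<alpha> / 2"
  define B where "B = 3 / (64 * N2\<^sup>2)"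
  have "0 < N1"
    using N2 N12 by linarith
  then have "0 < A" "0 < B"
    using N2 by (simp_all add: A_def B_def)
  have sqrt_AB: "sqrt (A * B) = sqrt (3 / 128) * N1 powr (\<alpha> / 2) / (2 powr \<alpha> * N2)"
  proof -
    have "sqrt ((N1 / 4) powr \<alpha>) = N1 powr (\<alpha> / 2) / 2 powr \<alpha>"
      using \<open>0 < N1\<close> by (simp add: powr_half_sqrt[symmetric] powr_powr powr_divide flip: powr_realpow)
    then show ?thesis
      using N2 by (simp add: A_def B_def real_sqrt_mult real_sqrt_divide field_simps)
  qed
  define F where "F = resonance_set \<alpha> N1 N2 \<tau> \<xi> \<eta> M"
  have slice: "{a. (a, \<eta> / \<xi> * a + u) \<in> F}
      = {s. s \<in> annulus N1 \<and> \<xi> - s \<in> annulus N2 \<and> \<bar>(\<tau> - \<eta>\<^sup>2 / \<xi>) - resonance \<alpha> \<xi> u s\<bar> \<le> M}" for u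
  proof -
    have "omega \<alpha> s (\<eta> / \<xi> * s + u) + omega \<alpha> (\<xi> - s) (\<eta> - (\<eta> / \<xi> * s + u))
        = resonance \<alpha> \<xi> u s + \<eta>\<^sup>2 / \<xi>"
      if "s \<in> annulus N1" "\<xi> - s \<in> annulus N2" for s
      using that N2 N12 by (intro omega_add_omega_sheared) (auto simp: annulus_def)
    then show ?thesis
      unfolding F_def resonance_set_def by (auto simp: algebra_simps)
  qed
  have "emeasure lborel F = (\<integral>\<^sup>+u. emeasure lborel {a. (a, \<eta> / \<xi> * a + u) \<in> F} \<partial>lborel)"
    unfolding F_def by (rule emeasure_lborel_shear) measurable
  also have "\<dots> \<le> (\<integral>\<^sup>+u. ennreal (8 * M) * ennreal (1 / (A + B * u\<^sup>2)) \<partial>lborel)"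
  proof (rule nn_integral_mono)
    fix u :: real
    have "emeasure lborel {a. (a, \<eta> / \<xi> * a + u) \<in> F} \<le> ennreal (8 * M / (A + B * u\<^sup>2))"
      unfolding slice A_def B_def using \<alpha> N2 N12 by (rule emeasure_resonance_near_level_le)
    also have "\<dots> = ennreal (8 * M) * ennreal (1 / (A + B * u\<^sup>2))"
      using M by (simp add: ennreal_mult'[symmetric])
    finally show "emeasure lborel {a. (a, \<eta> / \<xi> * a + u) \<in> F}
        \<le> ennreal (8 * M) * ennreal (1 / (A + B * u\<^sup>2))" .
  qed
  also have "\<dots> = ennreal (8 * M) * ennreal (pi / sqrt (A * B))"
    using \<open>0 < A\<close> \<open>0 < B\<close> by (simp add: nn_integral_cmult nn_integral_inverse_quadratic)
  also have "\<dots> = ennreal (8 * M * (pi / sqrt (A * B)))"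
    by (rule ennreal_mult[symmetric]) (use M \<open>0 < A\<close> \<open>0 < B\<close> in auto)
  finally show ?thesis
    unfolding F_def sqrt_AB by (simp add: field_simps)
qed

lemma min_mult_add_le:
  fixes a b :: real
  assumes "0 \<le> a" "0 \<le> b"
  shows "min a b * (a + b) \<le> 2 * a * b"
proof (cases "a \<le> b")
  case True
  then have "a * a \<le> a * b"
    using assms by (intro mult_left_mono)
  then show ?thesis
    using True by (simp add: min_def algebra_simps)
next
  case False
  then have "b * b \<le> a * b"
    using assms by (intro mult_right_mono) auto
  then show ?thesis
    using False by (simp add: min_def algebra_simps)
qed

lemma emeasure_Dset_overlap_le_resonance_set:
  fixes \<alpha> N1 N2 L1 L2 \<tau> \<xi> \<eta> :: real
  assumes L1: "0 \<le> L1" and L2: "0 \<le> L2"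
  shows "emeasure lborel {y. y \<in> Dset \<alpha> N1 L1 \<and> (\<tau>, \<xi>, \<eta>) - y \<in> Dset \<alpha> N2 L2}
    \<le> ennreal (2 * min L1 L2) * emeasure lborel (resonance_set \<alpha> N1 N2 \<tau> \<xi> \<eta> (L1 + L2))"
proof -
  define G where "G = {y. y \<in> Dset \<alpha> N1 L1 \<and> (\<tau>, \<xi>, \<eta>) - y \<in> Dset \<alpha> N2 L2}"
  have G_iff: "(t, a, b) \<in> G \<longleftrightarrow> a \<in> annulus N1 \<and> \<bar>t - omega \<alpha> a b\<bar> \<le> L1
      \<and> \<xi> - a \<in> annulus N2 \<and> \<bar>\<tau> - t - omega \<alpha> (\<xi> - a) (\<eta> - b)\<bar> \<le> L2" for t a b
    unfolding G_def Dset_def by simp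
  have "G \<in> sets (lborel \<Otimes>\<^sub>M lborel)"
    unfolding G_def lborel_prod sets_lborel by measurable
  moreover have "resonance_set \<alpha> N1 N2 \<tau> \<xi> \<eta> (L1 + L2) \<in> sets lborel"
    by measurable
  moreover have "p \<in> resonance_set \<alpha> N1 N2 \<tau> \<xi> \<eta> (L1 + L2)" if "(t, p) \<in> G" for t p
    using that unfolding resonance_set_def by (cases p) (auto simp: G_iff)
  moreover have "emeasure lborel ((\<lambda>t. (t, p)) -` G) \<le> ennreal (2 * min L1 L2)" for p
  proof -
    obtain a b where p: "p = (a, b)"
      by (cases p)
    let ?\<omega>1 = "omega \<alpha> a b" and ?\<omega>2 = "omega \<alpha> (\<xi> - a) (\<eta> - b)"
    have "(\<lambda>t. (t, p)) -` G \<subseteq> {?\<omega>1 - L1 .. ?\<omega>1 + L1}"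
      by (auto simp: p G_iff abs_le_iff)
    from emeasure_mono[OF this, of lborel]
    have "emeasure lborel ((\<lambda>t. (t, p)) -` G) \<le> ennreal (2 * L1)"
      using L1 by simp
    moreover have "(\<lambda>t. (t, p)) -` G \<subseteq> {\<tau> - ?\<omega>2 - L2 .. \<tau> - ?\<omega>2 + L2}"
      by (auto simp: p G_iff abs_le_iff)
    from emeasure_mono[OF this, of lborel]
    have "emeasure lborel ((\<lambda>t. (t, p)) -` G) \<le> ennreal (2 * L2)"
      using L2 by simp
    ultimately show ?thesis
      by (simp add: min_def)
  qed
  ultimately have "emeasure (lborel \<Otimes>\<^sub>M lborel) G
      \<le> ennreal (2 * min L1 L2) * emeasure lborel (resonance_set \<alpha> N1 N2 \<tau> \<xi> \<eta> (L1 + L2))"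
    by (intro lborel_pair.emeasure_pair_measure_le_fibre_bound)
  then show ?thesis
    unfolding G_def lborel_prod .
qed

lemma emeasure_Dset_overlap_le:
  fixes \<alpha> N1 N2 L1 L2 :: real and x :: "real \<times> real \<times> real"
  assumes \<alpha>: "1 \<le> \<alpha>" and N2: "0 < N2" and N12: "32 * N2 \<le> N1" and L1: "0 \<le> L1" and L2: "0 \<le> L2"
  shows "emeasure lborel {y. y \<in> Dset \<alpha> N1 L1 \<and> x - y \<in> Dset \<alpha> N2 L2}
    \<le> ennreal (32 * pi * 2 powr \<alpha> / sqrt (3 / 128) * N2 / N1 powr (\<alpha> / 2) * L1 * L2)"
proof -
  obtain \<tau> \<xi> \<eta> where x: "x = (\<tau>, \<xi>, \<eta>)"
    by (cases x) auto
  define c where "c = 8 * pi * 2 powr \<alpha> / sqrt (3 / 128) * N2 / N1 powr (\<alpha> / 2)"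
  have "0 \<le> c"
    unfolding c_def using N2 by simp
  have "emeasure lborel {y. y \<in> Dset \<alpha> N1 L1 \<and> x - y \<in> Dset \<alpha> N2 L2}
      \<le> ennreal (2 * min L1 L2) * emeasure lborel (resonance_set \<alpha> N1 N2 \<tau> \<xi> \<eta> (L1 + L2))"
    unfolding x using L1 L2 by (rule emeasure_Dset_overlap_le_resonance_set)
  also have "\<dots> \<le> ennreal (2 * min L1 L2) * ennreal (c * (L1 + L2))"
    unfolding c_def using \<alpha> N2 N12 L1 L2
    by (intro mult_left_mono) (auto simp: ac_simps intro: order.trans[OF emeasure_resonance_set_le])
  also have "\<dots> = ennreal (2 * (min L1 L2 * (L1 + L2)) * c)"
    using L1 L2 \<open>0 \<le> c\<close> by (subst ennreal_mult[symmetric]) (auto simp: ac_simps)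
  also have "\<dots> \<le> ennreal (2 * (2 * L1 * L2) * c)"
    using min_mult_add_le[OF L1 L2] \<open>0 \<le> c\<close> by (intro ennreal_leI mult_right_mono mult_left_mono) auto
  finally show ?thesis
    unfolding c_def by (simp add: ac_simps)
qed

theorem lemma4p4:
  fixes \<alpha> :: real
  assumes "\<alpha> \<ge> 1"
  shows "\<exists>K>0. \<exists>C>0. \<forall>(N1::real) (N2::real) (L1::real) (L2::real)
            (f1 :: real \<times> real \<times> real \<Rightarrow> real) (f2 :: real \<times> real \<times> real \<Rightarrow> real).
     (\<exists>k::nat. N1 = 2 ^ k) \<and> (\<exists>k::int. N2 = 2 powr k) \<and> N1 \<ge> K * N2 \<and>
     (\<exists>k::nat. L1 = 2 ^ k) \<and> (\<exists>k::nat. L2 = 2 ^ k) \<and>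
     f1 \<in> borel_measurable lborel \<and> f2 \<in> borel_measurable lborel \<and>
     (\<forall>x. f1 x \<ge> 0) \<and> (\<forall>x. f2 x \<ge> 0) \<and>
     {x. f1 x \<noteq> 0} \<subseteq> Dset \<alpha> N1 L1 \<and> {x. f2 x \<noteq> 0} \<subseteq> Dset \<alpha> N2 L2
     \<longrightarrow> (\<integral>\<^sup>+ x. (conv3 f1 f2 x)\<^sup>2 \<partial>lborel)
          \<le> ennreal (C\<^sup>2 * N2 / N1 powr (\<alpha> / 2) * L1 * L2) * L2sq f1 * L2sq f2"
proof -
  define C where "C = sqrt (32 * pi * 2 powr \<alpha> / sqrt (3 / 128))"
  have C: "0 < C" "C\<^sup>2 = 32 * pi * 2 powr \<alpha> / sqrt (3 / 128)"
    unfolding C_def by simp_all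
  have bound: "(\<integral>\<^sup>+x. (conv3 f1 f2 x)\<^sup>2 \<partial>lborel)
      \<le> ennreal (C\<^sup>2 * N2 / N1 powr (\<alpha> / 2) * L1 * L2) * L2sq f1 * L2sq f2"
    if "0 < N2" "32 * N2 \<le> N1" "0 \<le> L1" "0 \<le> L2"
      and "f1 \<in> borel_measurable lborel" "f2 \<in> borel_measurable lborel" "\<forall>x. f1 x \<ge> 0" "\<forall>x. f2 x \<ge> 0"
      and "{x. f1 x \<noteq> 0} \<subseteq> Dset \<alpha> N1 L1" "{x. f2 x \<noteq> 0} \<subseteq> Dset \<alpha> N2 L2"
    for N1 N2 L1 L2 :: real and f1 f2 :: "real \<times> real \<times> real \<Rightarrow> real"
    unfolding conv3_def L2sq_def
  proof (rule nn_integral_convolution_square_le)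
    fix x :: "real \<times> real \<times> real"
    have "emeasure lborel {y. f1 y \<noteq> 0 \<and> f2 (x - y) \<noteq> 0}
        \<le> emeasure lborel {y. y \<in> Dset \<alpha> N1 L1 \<and> x - y \<in> Dset \<alpha> N2 L2}"
      using that by (intro emeasure_mono) auto
    also have "\<dots> \<le> ennreal (C\<^sup>2 * N2 / N1 powr (\<alpha> / 2) * L1 * L2)"
      unfolding C(2) using assms that by (intro emeasure_Dset_overlap_le) auto
    finally show "emeasure lborel {y. f1 y \<noteq> 0 \<and> f2 (x - y) \<noteq> 0}
        \<le> ennreal (C\<^sup>2 * N2 / N1 powr (\<alpha> / 2) * L1 * L2)" .
  qed (use that in auto)
  show ?thesis
    using C(1) by (intro exI[of _ "32::real"] exI[of _ C] conjI allI impI bound) auto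
qed

end
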